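(* Let $M=\begin{pmatrix}a&b\\c&d\end{pmatrix}$ be a random real $2\times2$ matrix whose rows are exchangeable, i.e. $(a,b,c,d)\overset{d}{=}(c,d,a,b)$. Then $\Pr(M\text{ has both eigenvalues real})\ge\frac12$. *)

theory Defs
  imports "HOL-Analysis.Analysis" "HOL-Probability.Probability"
begin

definition swap_rows :: "real^2^2 \<Rightarrow> real^2^2" where
  "swap_rows A = (\<chi> i. A $ (if i = 1 then 2 else 1))"

definition real_eigenvalues :: "real^2^2 \<Rightarrow> bool" where
  "real_eigenvalues A \<longleftrightarrow>
     (\<forall>z::complex. (\<exists>v::complex^2. v \<noteq> 0 \<and>
        (\<chi> i j. complex_of_real (A $ i $ j)) *v v = z *s v) \<longrightarrow> Im z = 0)"

end

theory Submission
  imports Defs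
begin

text \<open>
  The eigenvalues of a real 2x2 matrix are real exactly when the discriminant
  \<open>(a - d)\<^sup>2 + 4bc\<close> of its characteristic polynomial is nonnegative.  Exchanging the rows
  turns the discriminant into \<open>(c - b)\<^sup>2 + 4ad\<close>, and the two discriminants add up to
  \<open>(a + d)\<^sup>2 + (b + c)\<^sup>2 \<ge> 0\<close>; so at least one of \<open>M\<close> and its row swap has real
  eigenvalues.  The two events cover the sample space and, as M and its row swap have
  the same law, they have equal probability, which is therefore at least 1/2.
\<close>

definition disc :: "real^2^2 \<Rightarrow> real" where
  "disc A = (A$1$1 - A$2$2)^2 + 4 * A$1$2 * A$2$1"

lemma matrix_vector_mult_eq_scalar_mult_2x2_iff:
  fixes M :: "'a::comm_ring_1^2^2"
  shows "M *v v = z *s v \<longleftrightarrow>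
    M$1$1 * v$1 + M$1$2 * v$2 = z * v$1 \<and> M$2$1 * v$1 + M$2$2 * v$2 = z * v$2"
  by (simp add: vec_eq_iff forall_2 matrix_vector_mult_def sum_2)

lemma eigenvalue_char_poly_2x2:
  fixes M :: "'a::idom^2^2"
  assumes "v \<noteq> 0" and "M *v v = z *s v"
  shows "(M$1$1 - z) * (M$2$2 - z) - M$1$2 * M$2$1 = 0"
proof -
  let ?p = "(M$1$1 - z) * (M$2$2 - z) - M$1$2 * M$2$1"
  have e1: "M$1$1 * v$1 + M$1$2 * v$2 = z * v$1" and e2: "M$2$1 * v$1 + M$2$2 * v$2 = z * v$2"
    using assms(2) by (simp_all add: matrix_vector_mult_eq_scalar_mult_2x2_iff)
  have "?p * v$1 = (M$2$2 - z) * (M$1$1 * v$1 + M$1$2 * v$2 - z * v$1)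
                   - M$1$2 * (M$2$1 * v$1 + M$2$2 * v$2 - z * v$2)"
    and "?p * v$2 = (M$1$1 - z) * (M$2$1 * v$1 + M$2$2 * v$2 - z * v$2)
                   - M$2$1 * (M$1$1 * v$1 + M$1$2 * v$2 - z * v$1)"
    by (simp_all add: algebra_simps)
  with e1 e2 have "?p * v$1 = 0" "?p * v$2 = 0" by simp_all
  moreover have "v$1 \<noteq> 0 \<or> v$2 \<noteq> 0"
    using assms(1) by (auto simp: vec_eq_iff forall_2)
  ultimately show ?thesis by auto
qed

lemma Im_eq_0_if_square_nonneg_real:
  fixes w :: complex
  assumes "w * w = complex_of_real r" and "r \<ge> 0"
  shows "Im w = 0"
proof (rule ccontr)
  assume "Im w \<noteq> 0"
  moreover have "Re w * Im w = 0"
    using arg_cong[OF assms(1), of Im] by auto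
  moreover have "Re w * Re w - Im w * Im w \<ge> 0"
    using arg_cong[OF assms(1), of Re] assms(2) by simp
  ultimately show False
    by (auto simp: mult_le_0_iff)
qed

lemma real_eigenvalues_if_disc_nonneg:
  assumes "disc A \<ge> 0"
  shows "real_eigenvalues A"
  unfolding real_eigenvalues_def
proof (intro allI impI)
  fix z :: complex
  assume "\<exists>v. v \<noteq> 0 \<and> (\<chi> i j. complex_of_real (A $ i $ j)) *v v = z *s v"
  then have char: "(of_real (A$1$1) - z) * (of_real (A$2$2) - z) - of_real (A$1$2) * of_real (A$2$1) = 0"
    using eigenvalue_char_poly_2x2 by fastforce
  define w where "w = 2 * z - of_real (A$1$1 + A$2$2)"
  \<comment> \<open>completing the square in the characteristic polynomial\<close>
  have "w * w = 4 * ((of_real (A$1$1) - z) * (of_real (A$2$2) - z) - of_real (A$1$2) * of_real (A$2$1))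
                + complex_of_real (disc A)"
    by (simp add: w_def disc_def algebra_simps power2_eq_square)
  then have "w * w = complex_of_real (disc A)"
    using char by simp
  then have "Im w = 0"
    using assms by (rule Im_eq_0_if_square_nonneg_real)
  then show "Im z = 0"
    by (simp add: w_def)
qed

lemma nonreal_eigenvalue_if_disc_neg:
  assumes "disc A < 0"
  shows "\<not> real_eigenvalues A"
proof -
  define a b c d where "a = A$1$1" "b = A$1$2" "c = A$2$1" "d = A$2$2"
  have neg: "(a - d)^2 + 4 * b * c < 0"
    using assms by (simp add: disc_def a_b_c_d_def)
  then have "b \<noteq> 0"
    by (smt (verit) mult_eq_0_iff zero_le_power2 mult_zero_right)
  define s where "s = sqrt (- ((a - d)^2 + 4 * b * c))"
  have s2: "s^2 = - ((a - d)^2 + 4 * b * c)" and "s > 0"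
    using neg by (simp_all add: s_def)
  define z where "z = Complex ((a + d) / 2) (s / 2)"
  define v where "v = (\<chi> i::2. if i = 1 then complex_of_real b else z - complex_of_real a)"
  have v1: "v$1 = b" and v2: "v$2 = z - a"
    by (simp_all add: v_def)
  have "z * z - (a + d) * z + (a * d - b * c) = 0"
    using s2 by (simp add: z_def complex_eq_iff algebra_simps power2_eq_square) (simp add: field_simps)
  then have "(\<chi> i j. complex_of_real (A $ i $ j)) *v v = z *s v"
    by (simp add: matrix_vector_mult_eq_scalar_mult_2x2_iff v1 v2 a_b_c_d_def[symmetric] algebra_simps)
  moreover have "v \<noteq> 0"
    using \<open>b \<noteq> 0\<close> v1 by (metis zero_index of_real_eq_0_iff)
  moreover have "Im z \<noteq> 0"
    using \<open>s > 0\<close> by (simp add: z_def)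
  ultimately show ?thesis
    unfolding real_eigenvalues_def by blast
qed

lemma real_eigenvalues_iff_disc_nonneg: "real_eigenvalues A \<longleftrightarrow> disc A \<ge> 0"
  using real_eigenvalues_if_disc_nonneg nonreal_eigenvalue_if_disc_neg not_le by blast

lemma swap_rows_nth [simp]: "swap_rows A $ 1 = A $ 2" "swap_rows A $ 2 = A $ 1"
  by (simp_all add: swap_rows_def)

lemma disc_add_disc_swap_rows:
  "disc A + disc (swap_rows A) = (A$1$1 + A$2$2)^2 + (A$1$2 + A$2$1)^2"
  by (simp add: disc_def power2_eq_square algebra_simps)

lemma real_eigenvalues_or_swap_rows: "real_eigenvalues A \<or> real_eigenvalues (swap_rows A)"
  using disc_add_disc_swap_rows[of A] real_eigenvalues_iff_disc_nonneg
  by (smt (verit) zero_le_power2)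

lemma sets_borel_real_eigenvalues: "{A. real_eigenvalues A} \<in> sets borel"
proof -
  have "continuous_on UNIV disc"
    unfolding disc_def by (intro continuous_intros)
  then show ?thesis
    unfolding real_eigenvalues_iff_disc_nonneg
    by (intro borel_closed closed_Collect_le continuous_on_const)
qed

lemma borel_measurable_swap_rows: "swap_rows \<in> borel_measurable borel"
  unfolding swap_rows_def by (intro borel_measurable_continuous_onI continuous_intros)

lemma (in prob_space) prob_ge_half_if_invariant_cover:
  assumes X: "X \<in> measurable M N" and f: "f \<in> measurable N N"
    and law: "distr M N X = distr M N (\<lambda>\<omega>. f (X \<omega>))"
    and S: "S \<in> sets N" and cover: "\<And>x. x \<in> space N \<Longrightarrow> x \<in> S \<or> f x \<in> S"
  shows "prob {\<omega> \<in> space M. X \<omega> \<in> S} \<ge> 1/2"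
proof -
  have fX: "(\<lambda>\<omega>. f (X \<omega>)) \<in> measurable M N"
    using measurable_comp[OF X f] by (simp add: comp_def)
  define E1 where "E1 = X -` S \<inter> space M"
  define E2 where "E2 = (\<lambda>\<omega>. f (X \<omega>)) -` S \<inter> space M"
  have events: "E1 \<in> events" "E2 \<in> events"
    unfolding E1_def E2_def using X fX S by (simp_all add: measurable_sets)
  have "prob E1 = prob E2"
    unfolding E1_def E2_def using measure_distr[OF X S] measure_distr[OF fX S] law by simp
  moreover have "E1 \<union> E2 = space M"
    using cover measurable_space[OF X] by (auto simp: E1_def E2_def)
  then have "1 \<le> prob E1 + prob E2"
    using measure_Un_le[OF events] by (simp add: prob_space)
  moreover have "E1 = {\<omega> \<in> space M. X \<omega> \<in> S}"
    by (auto simp: E1_def)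
  ultimately show ?thesis
    by simp
qed

theorem mainTheorem19:
  fixes P :: "'w measure" and X :: "'w \<Rightarrow> real^2^2"
  assumes "prob_space P"
    and "X \<in> borel_measurable P"
    and "distr P borel X = distr P borel (\<lambda>\<omega>. swap_rows (X \<omega>))"
  shows "measure P {\<omega> \<in> space P. real_eigenvalues (X \<omega>)} \<ge> 1/2"
  using prob_space.prob_ge_half_if_invariant_cover[OF assms(1,2) borel_measurable_swap_rows
      assms(3) sets_borel_real_eigenvalues] real_eigenvalues_or_swap_rows
  by simp
end
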